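(* Let $A$ be a division ring and let $R=A[x]$ be the polynomial ring over $A$ in a central indeterminate $x$. If $R$ is right quasi-invariant, then $A$ is a field.
   Context: All rings are associative, unital and non-zero. A ring is right quasi-invariant if every maximal right ideal of it is a two-sided ideal. *)

theory Defs
  imports "HOL-Algebra.Ideal" "HOL-Algebra.UnivPoly"
begin

definition division_ring :: "('a, 'b) ring_scheme \<Rightarrow> bool" where
  "division_ring R \<longleftrightarrow> ring R \<and> \<one>\<^bsub>R\<^esub> \<noteq> \<zero>\<^bsub>R\<^esub> \<and> carrier R - {\<zero>\<^bsub>R\<^esub>} \<subseteq> Units R"

definition right_ideal :: "'a set \<Rightarrow> ('a, 'b) ring_scheme \<Rightarrow> bool" where
  "right_ideal I R \<longleftrightarrow> additive_subgroup I R \<and>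
     (\<forall>a\<in>I. \<forall>r\<in>carrier R. a \<otimes>\<^bsub>R\<^esub> r \<in> I)"

definition maximal_right_ideal :: "'a set \<Rightarrow> ('a, 'b) ring_scheme \<Rightarrow> bool" where
  "maximal_right_ideal I R \<longleftrightarrow> right_ideal I R \<and> I \<noteq> carrier R \<and>
     (\<forall>J. right_ideal J R \<and> I \<subseteq> J \<longrightarrow> J = I \<or> J = carrier R)"

definition right_quasi_invariant :: "('a, 'b) ring_scheme \<Rightarrow> bool" where
  "right_quasi_invariant R \<longleftrightarrow> (\<forall>I. maximal_right_ideal I R \<longrightarrow> ideal I R)"

end

theory Submission
  imports Defs
begin

text \<open>For a fixed \<open>a\<close>, left evaluation \<open>f \<mapsto> \<Sum> a\<^sup>i f\<^sub>i\<close> satisfies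
  \<open>(f g)(a) = \<Sum> a\<^sup>j f(a) g\<^sub>j\<close>, so its kernel is a right ideal of \<open>A[x]\<close>; it is maximal
  because every polynomial is congruent to the constant \<open>f(a)\<close> modulo the kernel, and
  nonzero constants are units. The kernel contains \<open>x - a\<close>, so if it is two-sided it
  also contains \<open>c (x - a) = c x - c a\<close>, whose left value is \<open>a c - c a\<close>. Hence quasi-invariance
  forces every \<open>a\<close> to commute with every \<open>c\<close>.\<close>

lemma (in ring) right_ideal_eq_carrier_if_one:
  assumes "right_ideal J R" and "\<one> \<in> J"
  shows "J = carrier R"
  using assms additive_subgroup.a_subset unfolding right_ideal_def by fastforce

lemma division_ring_commutative_imp_field:
  assumes div: "division_ring A"
    and comm: "\<And>x y. x \<in> carrier A \<Longrightarrow> y \<in> carrier A \<Longrightarrow> x \<otimes>\<^bsub>A\<^esub> y = y \<otimes>\<^bsub>A\<^esub> x"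
  shows "field A"
proof -
  have ring: "ring A" using div unfolding division_ring_def by blast
  then interpret ring A .
  have "cring A"
    by (intro cring.intro ring comm_monoid.intro is_monoid comm_monoid_axioms.intro comm)
  then show ?thesis
  proof (rule cring.cring_fieldI2)
    show "\<zero>\<^bsub>A\<^esub> \<noteq> \<one>\<^bsub>A\<^esub>" using div unfolding division_ring_def by auto
  next
    fix a assume "a \<in> carrier A" "a \<noteq> \<zero>\<^bsub>A\<^esub>"
    then have "a \<in> Units A" using div unfolding division_ring_def by blast
    then show "\<exists>b\<in>carrier A. a \<otimes>\<^bsub>A\<^esub> b = \<one>\<^bsub>A\<^esub>"
      using Units_inv_closed Units_r_inv by blast
  qed
qed

context UP_ring
begin

definition left_eval :: "'a \<Rightarrow> (nat \<Rightarrow> 'a) \<Rightarrow> 'a" where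
  "left_eval a f = (\<Oplus>i\<in>{..deg R f}. a [^] i \<otimes> coeff P f i)"

lemma left_eval_closed [simp]:
  "a \<in> carrier R \<Longrightarrow> f \<in> carrier P \<Longrightarrow> left_eval a f \<in> carrier R"
  unfolding left_eval_def by (auto intro!: R.finsum_closed)

lemma left_eval_zero [simp]: "left_eval a \<zero>\<^bsub>P\<^esub> = \<zero>"
  unfolding left_eval_def by simp

lemma left_eval_eq_finsum:
  assumes a: "a \<in> carrier R" and f: "f \<in> carrier P" and n: "deg R f \<le> n"
  shows "left_eval a f = (\<Oplus>i\<in>{..n}. a [^] i \<otimes> coeff P f i)"
proof -
  let ?s = "\<lambda>i. a [^] i \<otimes> coeff P f i"
  have "finsum R ?s {..n} = finsum R ?s ({..deg R f} \<union> {deg R f<..n})"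
    using n by (simp only: ivl_disj_un_one)
  also have "\<dots> = finsum R ?s {..deg R f}"
    using a f by (simp cong: R.finsum_cong add: R.finsum_Un_disjoint ivl_disj_int_one
      deg_aboveD Pi_def)
  finally show ?thesis unfolding left_eval_def by simp
qed

lemma left_eval_add:
  assumes a: "a \<in> carrier R" and f: "f \<in> carrier P" and g: "g \<in> carrier P"
  shows "left_eval a (f \<oplus>\<^bsub>P\<^esub> g) = left_eval a f \<oplus> left_eval a g"
proof -
  let ?n = "max (deg R f) (deg R g)"
  have "deg R (f \<oplus>\<^bsub>P\<^esub> g) \<le> ?n" using deg_add f g by blast
  then have "left_eval a (f \<oplus>\<^bsub>P\<^esub> g) = (\<Oplus>i\<in>{..?n}. a [^] i \<otimes> coeff P (f \<oplus>\<^bsub>P\<^esub> g) i)"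
    using left_eval_eq_finsum[OF a P.a_closed[OF f g]] by blast
  also have "\<dots> = (\<Oplus>i\<in>{..?n}. a [^] i \<otimes> coeff P f i \<oplus> a [^] i \<otimes> coeff P g i)"
    using a f g by (intro R.finsum_cong) (auto simp: R.r_distr Pi_def)
  also have "\<dots> = (\<Oplus>i\<in>{..?n}. a [^] i \<otimes> coeff P f i) \<oplus> (\<Oplus>i\<in>{..?n}. a [^] i \<otimes> coeff P g i)"
    using a f g by (intro R.finsum_addf) (auto simp: Pi_def)
  also have "\<dots> = left_eval a f \<oplus> left_eval a g"
    using left_eval_eq_finsum[OF a f, of ?n] left_eval_eq_finsum[OF a g, of ?n] by simp
  finally show ?thesis .
qed

lemma left_eval_neg:
  assumes a: "a \<in> carrier R" and f: "f \<in> carrier P"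
  shows "left_eval a (\<ominus>\<^bsub>P\<^esub> f) = \<ominus> left_eval a f"
proof -
  have "left_eval a (\<ominus>\<^bsub>P\<^esub> f) \<oplus> left_eval a f = \<zero>"
    using left_eval_add[OF a P.a_inv_closed[OF f] f] f by (simp add: P.l_neg)
  then show ?thesis
    using a f by (simp add: R.minus_equality)
qed

lemma left_eval_minus:
  assumes "a \<in> carrier R" and "f \<in> carrier P" and "g \<in> carrier P"
  shows "left_eval a (f \<ominus>\<^bsub>P\<^esub> g) = left_eval a f \<ominus> left_eval a g"
  using assms by (simp add: P.minus_eq R.minus_eq left_eval_add left_eval_neg)

lemma left_eval_monom:
  assumes a: "a \<in> carrier R" and c: "c \<in> carrier R"
  shows "left_eval a (monom P c n) = a [^] n \<otimes> c"
proof -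
  have "left_eval a (monom P c n) = (\<Oplus>i\<in>{..n}. a [^] i \<otimes> coeff P (monom P c n) i)"
    using left_eval_eq_finsum[OF a _ deg_monom_le[OF c]] c by simp
  also have "\<dots> = (\<Oplus>i\<in>{..n}. if n = i then a [^] i \<otimes> c else \<zero>)"
    using a c by (intro R.finsum_cong') (auto simp: Pi_def)
  also have "\<dots> = a [^] n \<otimes> c"
    using a c by (subst R.finsum_singleton) (auto simp: Pi_def)
  finally show ?thesis .
qed

lemma left_eval_finsum:
  assumes a: "a \<in> carrier R" and "finite I" and "h \<in> I \<rightarrow> carrier P"
  shows "left_eval a (finsum P h I) = (\<Oplus>i\<in>I. left_eval a (h i))"
  using assms(2,3)
proof (induction I rule: finite_induct)
  case (insert x I)
  then have hx: "h x \<in> carrier P" and hI: "h \<in> I \<rightarrow> carrier P" by auto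
  have "left_eval a (finsum P h (insert x I)) = left_eval a (h x) \<oplus> left_eval a (finsum P h I)"
    using insert hx hI a by (simp add: P.finsum_insert left_eval_add)
  also have "\<dots> = (\<Oplus>i\<in>insert x I. left_eval a (h i))"
    using insert hx hI a by (simp add: R.finsum_insert Pi_def)
  finally show ?case .
qed simp

lemma coeff_mult_monom:
  assumes f: "f \<in> carrier P" and c: "c \<in> carrier R"
  shows "coeff P (f \<otimes>\<^bsub>P\<^esub> monom P c j) k = (if j \<le> k then coeff P f (k - j) \<otimes> c else \<zero>)"
proof -
  have "coeff P (f \<otimes>\<^bsub>P\<^esub> monom P c j) k
      = (\<Oplus>i\<in>{..k}. coeff P f i \<otimes> (if j = k - i then c else \<zero>))"
    using f c by simp
  also have "\<dots> = (\<Oplus>i\<in>{..k}. if k - j = i \<and> j \<le> k then coeff P f i \<otimes> c else \<zero>)"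
    using f c by (intro R.finsum_cong') (auto simp: Pi_def)
  also have "\<dots> = (if j \<le> k then coeff P f (k - j) \<otimes> c else \<zero>)"
    using f c by (cases "j \<le> k") (auto simp: R.finsum_singleton Pi_def)
  finally show ?thesis .
qed

lemma left_eval_mult_const:
  assumes a: "a \<in> carrier R" and f: "f \<in> carrier P" and c: "c \<in> carrier R"
  shows "left_eval a (f \<otimes>\<^bsub>P\<^esub> monom P c 0) = left_eval a f \<otimes> c"
proof -
  have "deg R (f \<otimes>\<^bsub>P\<^esub> monom P c 0) \<le> deg R f"
    using deg_mult_ring[OF f monom_closed[OF c, of 0]] deg_monom_le[OF c, of 0] by simp
  then have "left_eval a (f \<otimes>\<^bsub>P\<^esub> monom P c 0)
      = (\<Oplus>i\<in>{..deg R f}. a [^] i \<otimes> coeff P (f \<otimes>\<^bsub>P\<^esub> monom P c 0) i)"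
    using left_eval_eq_finsum a f c by simp
  also have "\<dots> = (\<Oplus>i\<in>{..deg R f}. (a [^] i \<otimes> coeff P f i) \<otimes> c)"
    using a c f by (intro R.finsum_cong')
      (auto simp: coeff_mult_monom R.m_assoc Pi_def simp del: coeff_mult)
  also have "\<dots> = left_eval a f \<otimes> c"
    unfolding left_eval_def using a c f by (subst R.finsum_ldistr) (auto simp: Pi_def)
  finally show ?thesis .
qed

lemma left_eval_mult_var:
  assumes a: "a \<in> carrier R" and f: "f \<in> carrier P"
  shows "left_eval a (f \<otimes>\<^bsub>P\<^esub> monom P \<one> 1) = a \<otimes> left_eval a f"
proof -
  let ?g = "f \<otimes>\<^bsub>P\<^esub> monom P \<one> 1"
  have "deg R ?g \<le> Suc (deg R f)"
    using deg_mult_ring[OF f monom_closed[OF R.one_closed, of 1]]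
      deg_monom_le[OF R.one_closed, of 1] by simp
  then have "left_eval a ?g = (\<Oplus>i\<in>{..Suc (deg R f)}. a [^] i \<otimes> coeff P ?g i)"
    using left_eval_eq_finsum a f by simp
  also have "\<dots> = (\<Oplus>i\<in>{..deg R f}. a [^] Suc i \<otimes> coeff P f i)"
    using a f by (subst R.finsum_Suc2) (auto simp: Pi_def coeff_mult_monom simp del: coeff_mult)
  also have "\<dots> = (\<Oplus>i\<in>{..deg R f}. a \<otimes> (a [^] i \<otimes> coeff P f i))"
    using a f R.nat_pow_Suc2[OF a]
    by (intro R.finsum_cong') (auto simp: Pi_def simp flip: R.m_assoc)
  also have "\<dots> = a \<otimes> left_eval a f"
    unfolding left_eval_def using a f by (subst R.finsum_rdistr) (auto simp: Pi_def)
  finally show ?thesis .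
qed

lemma left_eval_mult_monom:
  assumes a: "a \<in> carrier R" and f: "f \<in> carrier P" and c: "c \<in> carrier R"
  shows "left_eval a (f \<otimes>\<^bsub>P\<^esub> monom P c j) = a [^] j \<otimes> left_eval a f \<otimes> c"
proof (induction j)
  case 0
  then show ?case using left_eval_mult_const a f c by simp
next
  case (Suc j)
  have "f \<otimes>\<^bsub>P\<^esub> monom P c (Suc j) = (f \<otimes>\<^bsub>P\<^esub> monom P c j) \<otimes>\<^bsub>P\<^esub> monom P \<one> 1"
    using monom_mult[OF c R.one_closed, of j 1] f c by (simp add: P.m_assoc)
  then have "left_eval a (f \<otimes>\<^bsub>P\<^esub> monom P c (Suc j)) = a \<otimes> left_eval a (f \<otimes>\<^bsub>P\<^esub> monom P c j)"
    using left_eval_mult_var[OF a] f c by simp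
  also have "\<dots> = (a \<otimes> a [^] j) \<otimes> left_eval a f \<otimes> c"
    using Suc a f c by (simp add: R.m_assoc)
  finally show ?case
    using a by (simp only: R.nat_pow_Suc2)
qed

lemma left_eval_mult:
  assumes a: "a \<in> carrier R" and f: "f \<in> carrier P" and g: "g \<in> carrier P"
  shows "left_eval a (f \<otimes>\<^bsub>P\<^esub> g) = (\<Oplus>j\<in>{..deg R g}. a [^] j \<otimes> left_eval a f \<otimes> coeff P g j)"
proof -
  have "f \<otimes>\<^bsub>P\<^esub> g = f \<otimes>\<^bsub>P\<^esub> (\<Oplus>\<^bsub>P\<^esub> j \<in> {..deg R g}. monom P (coeff P g j) j)"
    using up_repr[OF g] by simp
  also have "\<dots> = (\<Oplus>\<^bsub>P\<^esub> j \<in> {..deg R g}. f \<otimes>\<^bsub>P\<^esub> monom P (coeff P g j) j)"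
    using f g by (subst P.finsum_rdistr) (auto simp: Pi_def)
  finally have "left_eval a (f \<otimes>\<^bsub>P\<^esub> g)
      = (\<Oplus>j\<in>{..deg R g}. left_eval a (f \<otimes>\<^bsub>P\<^esub> monom P (coeff P g j) j))"
    using a f g by (simp add: left_eval_finsum Pi_def)
  also have "\<dots> = (\<Oplus>j\<in>{..deg R g}. a [^] j \<otimes> left_eval a f \<otimes> coeff P g j)"
    using a f g by (intro R.finsum_cong') (auto simp: left_eval_mult_monom Pi_def)
  finally show ?thesis .
qed

definition left_eval_kernel :: "'a \<Rightarrow> (nat \<Rightarrow> 'a) set" where
  "left_eval_kernel a = {f \<in> carrier P. left_eval a f = \<zero>}"

lemma right_ideal_left_eval_kernel:
  assumes a: "a \<in> carrier R"
  shows "right_ideal (left_eval_kernel a) P"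
  unfolding right_ideal_def
proof (intro conjI ballI)
  show "additive_subgroup (left_eval_kernel a) P"
    by (rule additive_subgroupI, rule P.add.subgroupI)
      (auto simp: left_eval_kernel_def a_inv_def[symmetric] a left_eval_neg left_eval_add)
next
  fix f g assume "f \<in> left_eval_kernel a" "g \<in> carrier P"
  then show "f \<otimes>\<^bsub>P\<^esub> g \<in> left_eval_kernel a"
    using a by (simp add: left_eval_kernel_def left_eval_mult)
qed

lemma monom_left_eval_in_right_ideal:
  assumes a: "a \<in> carrier R" and J: "right_ideal J P" and kernel: "left_eval_kernel a \<subseteq> J"
    and f: "f \<in> J"
  shows "monom P (left_eval a f) 0 \<in> J"
proof -
  let ?c = "monom P (left_eval a f) 0"
  have sg: "additive_subgroup J P" using J unfolding right_ideal_def by blast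
  have fc: "f \<in> carrier P" using f additive_subgroup.a_subset[OF sg] by blast
  have cc: "?c \<in> carrier P" using a fc by simp
  have "left_eval a (f \<ominus>\<^bsub>P\<^esub> ?c) = \<zero>"
    using a fc by (simp add: left_eval_minus left_eval_monom R.minus_eq R.r_neg)
  then have "f \<ominus>\<^bsub>P\<^esub> ?c \<in> J" using kernel fc cc by (auto simp: left_eval_kernel_def)
  then have "f \<ominus>\<^bsub>P\<^esub> (f \<ominus>\<^bsub>P\<^esub> ?c) \<in> J"
    using f sg by (metis P.minus_eq additive_subgroup.a_closed additive_subgroup.a_inv_closed)
  moreover have "f \<ominus>\<^bsub>P\<^esub> (f \<ominus>\<^bsub>P\<^esub> ?c) = ?c"
    using fc cc by (simp add: P.minus_eq P.minus_add P.a_ac P.r_neg1 P.r_neg2)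
  ultimately show ?thesis by (simp only:)
qed

lemma maximal_right_ideal_left_eval_kernel:
  assumes a: "a \<in> carrier R" and units: "carrier R - {\<zero>} \<subseteq> Units R" and nontrivial: "\<one> \<noteq> \<zero>"
  shows "maximal_right_ideal (left_eval_kernel a) P"
  unfolding maximal_right_ideal_def
proof (intro conjI allI impI)
  show "right_ideal (left_eval_kernel a) P"
    using right_ideal_left_eval_kernel[OF a] .
  have "left_eval a \<one>\<^bsub>P\<^esub> = \<one>"
    using left_eval_monom[OF a R.one_closed, of 0] monom_one by simp
  then have "\<one>\<^bsub>P\<^esub> \<notin> left_eval_kernel a"
    using nontrivial by (simp add: left_eval_kernel_def)
  then show "left_eval_kernel a \<noteq> carrier P" by blast
next
  fix J assume "right_ideal J P \<and> left_eval_kernel a \<subseteq> J"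
  then have J: "right_ideal J P" and kernel: "left_eval_kernel a \<subseteq> J" by auto
  show "J = left_eval_kernel a \<or> J = carrier P"
  proof (cases "J = left_eval_kernel a")
    case False
    then obtain f where f: "f \<in> J" "f \<notin> left_eval_kernel a" using kernel by blast
    have fc: "f \<in> carrier P"
      using f J additive_subgroup.a_subset unfolding right_ideal_def by blast
    define c where "c = left_eval a f"
    have cu: "c \<in> Units R" using f fc a units by (auto simp: c_def left_eval_kernel_def)
    then have "monom P c 0 \<otimes>\<^bsub>P\<^esub> monom P (inv c) 0 = \<one>\<^bsub>P\<^esub>"
      using monom_mult[of c "inv c" 0 0] R.Units_closed[OF cu] by (simp add: monom_one)
    moreover have "monom P c 0 \<in> J"
      unfolding c_def using monom_left_eval_in_right_ideal[OF a J kernel f(1)] .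
    ultimately have "\<one>\<^bsub>P\<^esub> \<in> J"
      using J cu unfolding right_ideal_def by (metis R.Units_inv_closed monom_closed)
    then show ?thesis using P.right_ideal_eq_carrier_if_one[OF J] by blast
  qed simp
qed

lemma left_eval_const_mult_X_minus:
  assumes a: "a \<in> carrier R" and c: "c \<in> carrier R"
  shows "left_eval a (monom P c 0 \<otimes>\<^bsub>P\<^esub> (monom P \<one> 1 \<ominus>\<^bsub>P\<^esub> monom P a 0)) = a \<otimes> c \<ominus> c \<otimes> a"
proof -
  have "monom P c 0 \<otimes>\<^bsub>P\<^esub> (monom P \<one> 1 \<ominus>\<^bsub>P\<^esub> monom P a 0) = monom P c 1 \<ominus>\<^bsub>P\<^esub> monom P (c \<otimes> a) 0"
    using a c monom_mult[of c \<one> 0 1] monom_mult[of c a 0 0] by (simp add: P.r_distr P.r_minus P.minus_eq)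
  then show ?thesis
    using a c by (simp add: left_eval_minus left_eval_monom)
qed

lemma commute_if_ideal_left_eval_kernel:
  assumes a: "a \<in> carrier R" and c: "c \<in> carrier R" and ideal: "ideal (left_eval_kernel a) P"
  shows "a \<otimes> c = c \<otimes> a"
proof -
  have "monom P \<one> 1 \<ominus>\<^bsub>P\<^esub> monom P a 0 \<in> left_eval_kernel a"
    using a by (simp add: left_eval_kernel_def left_eval_minus left_eval_monom R.minus_eq R.r_neg)
  then have "monom P c 0 \<otimes>\<^bsub>P\<^esub> (monom P \<one> 1 \<ominus>\<^bsub>P\<^esub> monom P a 0) \<in> left_eval_kernel a"
    using ideal.I_l_closed[OF ideal] c by simp
  then have "a \<otimes> c \<ominus> c \<otimes> a = \<zero>"
    using left_eval_const_mult_X_minus[OF a c] by (simp add: left_eval_kernel_def)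
  then show ?thesis
    using a c by (metis R.minus_eq R.add.inv_closed R.m_closed R.minus_minus R.minus_equality)
qed

end

theorem lemma2p1:
  fixes A :: "('a, 'b) ring_scheme"
  assumes "division_ring A"
    and "right_quasi_invariant (UP A)"
  shows "field A"
proof (rule division_ring_commutative_imp_field[OF assms(1)])
  have ring: "ring A" and nontrivial: "\<one>\<^bsub>A\<^esub> \<noteq> \<zero>\<^bsub>A\<^esub>" and units: "carrier A - {\<zero>\<^bsub>A\<^esub>} \<subseteq> Units A"
    using assms(1) unfolding division_ring_def by auto
  interpret UP_ring A "UP A" using ring by (simp add: UP_ring_def)
  fix a c assume a: "a \<in> carrier A" and c: "c \<in> carrier A"
  have "ideal (left_eval_kernel a) (UP A)"
    using assms(2) maximal_right_ideal_left_eval_kernel[OF a units nontrivial]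
    unfolding right_quasi_invariant_def by blast
  then show "a \<otimes>\<^bsub>A\<^esub> c = c \<otimes>\<^bsub>A\<^esub> a"
    using commute_if_ideal_left_eval_kernel[OF a c] by blast
qed

end
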